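(* Let $K\ge 1$ and, for $k=1,\dots,K$, let $a_k>0$, $b_k>0$, $P_{L,k}>0$, $\bar{\gamma}>0$, and let $p>0$, $q>0$. Let $Z_1,\dots,Z_K$ be independent, with $Z_k$ gamma distributed with shape $a_k$ and scale $b_k$ (the moment-matched gamma approximation described in the context), set $\gamma_k=\frac{\bar{\gamma}}{P_{L,k}}Z_k^2$, $\gamma^*=\max_k\gamma_k$, and $P_e=E\left[p\,Q\left(\sqrt{2q\gamma^*}\right)\right]$, where $Q(x)=\frac{1}{\sqrt{2\pi}}\int_x^\infty e^{-t^2/2}dt$. Then $$P_e=\frac{p\sqrt{q}}{2\sqrt{\pi}}\sum_{n_1=0}^{\infty}\cdots\sum_{n_K=0}^{\infty}\prod_{k=1}^{K}\frac{(-1)^{n_k}\left(\sqrt{\frac{P_{L,k}}{\bar{\gamma}b_k^2}}\right)^{a_k+n_k}}{n_k!\,(a_k+n_k)\,\Gamma(a_k)}\cdot\frac{\Gamma\left(\frac{\sum_{k=1}^{K}(a_k+n_k)}{2}+\frac12\right)}{q^{\frac{\sum_{k=1}^{K}(a_k+n_k)}{2}+\frac12}}.$$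
   Context: Model: there are $K$ reflecting surfaces; surface $k$ has $N_k$ elements with mutually independent amplitudes $\alpha_k^{(i)}$ (Nakagami-$m$, shape $m_{k,1}$, spread $\Omega_{k,1}$) and $\beta_k^{(i)}$ (Nakagami-$m$, shape $m_{k,2}$, spread $\Omega_{k,2}$), and $a_k=N_k\mu_k^2/\sigma_k^2$, $b_k=\sigma_k^2/\mu_k$, where $\mu_k,\sigma_k^2$ are the mean and variance of $\alpha_k^{(1)}\beta_k^{(1)}$; the distribution of $\sum_{i=1}^{N_k}\alpha_k^{(i)}\beta_k^{(i)}$ is approximated by the gamma law with shape $a_k$, scale $b_k$. The constants $p,q$ depend on the modulation (e.g. BPSK: $p=q=1$). $P_e$ is the average symbol error probability. *)

theory Defs
  imports "HOL-Probability.Probability"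
begin

definition gamma_density :: "real \<Rightarrow> real \<Rightarrow> real \<Rightarrow> real" where
  "gamma_density a b x =
     (if 0 < x then x powr (a - 1) * exp (- x / b) / (Gamma a * b powr a) else 0)"

definition Qfun :: "real \<Rightarrow> real" where
  "Qfun x = 1 / sqrt (2 * pi) * (LBINT t:{x..}. exp (- (t\<^sup>2) / 2))"

end

(* Q(x / sigma) is the tail beyond x of the N(0, sigma^2) density.  With sigma = 1 / sqrt (2 q),
   Tonelli's theorem therefore turns P_e = p E[Q (sqrt gamma* / sigma)] into p sqrt (q / pi) times
   the integral over u >= 0 of exp (- q u^2) F u, where F is the distribution function of
   sqrt gamma*.  By independence F u is the product of the gamma distribution functions
   P (a_k, alpha_k u), alpha_k = sqrt (P_Lk / (gbar b_k^2)), and the regularized lower incomplete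
   gamma function P (a, x) has the absolutely convergent expansion
   sum_m (-1)^m x^(a+m) / (m! (a+m) Gamma a).  Multiplying out the K series and integrating term
   by term against exp (- q u^2) gives Gamma ((S+1)/2) / (2 q^((S+1)/2)) with S = sum_k (a_k + n_k).
   The exchange of sum and integral is justified because the series of absolute values is bounded
   by C u^(sum_k a_k) exp (beta u), which the Gaussian weight keeps integrable. *)

theory Submission
  imports Defs
begin

section \<open>Power moments of Gaussian weights\<close>

lemma has_bochner_integral_lborel_if_has_integral:
  fixes f :: "real \<Rightarrow> real"
  assumes "f \<in> borel_measurable borel" and "\<Omega> \<in> sets borel"
    and "\<And>x. x \<in> \<Omega> \<Longrightarrow> 0 \<le> f x" and "(f has_integral I) \<Omega>"
  shows "has_bochner_integral lborel (\<lambda>x. indicator \<Omega> x * f x) I"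
proof -
  have "0 \<le> I"
    using has_integral_nonneg[OF assms(4)] assms(3) by blast
  moreover have "(\<integral>\<^sup>+x. ennreal (indicator \<Omega> x * f x) \<partial>lborel) = ennreal I"
    using nn_integral_has_integral_lebesgue[OF assms(3,4)] by simp
  ultimately show ?thesis
    using assms(1,2,3)
    by (subst has_bochner_integral_iff, intro nn_integral_eq_integrable[THEN iffD1])
       (auto simp: indicator_def)
qed

lemma has_bochner_integral_indicator_powr:
  fixes s x :: real
  assumes "s > -1" and "x \<ge> 0"
  shows "has_bochner_integral lborel (\<lambda>t. indicator {0..x} t * t powr s) (x powr (s + 1) / (s + 1))"
  by (rule has_bochner_integral_lborel_if_has_integral
      [OF _ _ _ has_integral_powr_from_0[OF assms]]) auto

lemma has_integral_powr_exp_neg_square: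
  fixes A q :: real
  assumes A: "A > -1" and q: "q > 0"
  shows "((\<lambda>u. u powr A * exp (- q * u\<^sup>2)) has_integral
           Gamma ((A + 1) / 2) / (2 * q powr ((A + 1) / 2))) {0..}"
proof -
  define s where "s = (A + 1) / 2"
  have s: "s > 0" using A by (simp add: s_def)
  define g where "g t = t powr (s - 1) / exp t" for t :: real
  have G: "(g has_integral Gamma s) {0..}"
    unfolding g_def by (rule Gamma_integral_real[OF s])
  have img: "(\<lambda>u. q * u\<^sup>2) ` {0..} = {0::real..}"
  proof (intro equalityI subsetI)
    fix t :: real assume "t \<in> {0..}"
    then have "t = q * (sqrt (t / q))\<^sup>2" and "sqrt (t / q) \<in> {0..}" using q by auto
    then show "t \<in> (\<lambda>u. q * u\<^sup>2) ` {0..}" by blast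
  qed (use q in auto)
  have inj: "inj_on (\<lambda>u. q * u\<^sup>2) {0::real..}"
    using q by (intro inj_onI) auto
  have der: "((\<lambda>u. q * u\<^sup>2) has_field_derivative 2 * q * u) (at u within {0..})" for u
    by (auto intro!: derivative_eq_intros)
  have "g absolutely_integrable_on {0..}"
    by (intro nonnegative_absolutely_integrable_1 has_integral_integrable[OF G]) (simp add: g_def)
  then have "(\<lambda>u. \<bar>2 * q * u\<bar> * g (q * u\<^sup>2)) absolutely_integrable_on {0..} \<and>
      integral {0..} (\<lambda>u. \<bar>2 * q * u\<bar> * g (q * u\<^sup>2)) = Gamma s"
    using has_absolute_integral_change_of_variables_1'[OF _ der inj, of g "Gamma s"]
      img integral_unique[OF G]
    by simp
  then have substituted: "((\<lambda>u. \<bar>2 * q * u\<bar> * g (q * u\<^sup>2)) has_integral Gamma s) {0..}"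
    by (metis has_integral_integral set_lebesgue_integral_eq_integral(1) absolutely_integrable_on_def)
  have integrand: "\<bar>2 * q * u\<bar> * g (q * u\<^sup>2) = 2 * q powr s * (u powr A * exp (- q * u\<^sup>2))"
    if "u \<in> {0..}" for u
  proof (cases "u = 0")
    case False
    with that have u: "u > 0" by auto
    have pw: "(q * u\<^sup>2) powr (s - 1) = q powr (s - 1) * u powr (A - 1)"
      using u q by (simp add: powr_mult powr_powr s_def flip: powr_numeral)
        (rule arg_cong[where f = "(powr) u"], simp)
    have qs: "q * q powr (s - 1) = q powr s" and uA: "u * u powr (A - 1) = u powr A"
      using u q by (simp_all add: powr_mult_base)
    show ?thesis
      using u q by (simp add: g_def pw abs_mult exp_minus divide_inverse mult_ac flip: qs uA)
  qed (use s in \<open>simp add: g_def\<close>)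
  from has_integral_divide[OF has_integral_eq[OF integrand substituted], of "2 * q powr s"]
  show ?thesis
    using q by (simp add: s_def)
qed

lemma has_bochner_integral_powr_exp_neg_square:
  fixes A q :: real
  assumes "A > -1" and "q > 0"
  shows "has_bochner_integral lborel (\<lambda>u. indicator {0..} u * (u powr A * exp (- q * u\<^sup>2)))
           (Gamma ((A + 1) / 2) / (2 * q powr ((A + 1) / 2)))"
  by (rule has_bochner_integral_lborel_if_has_integral
      [OF _ _ _ has_integral_powr_exp_neg_square[OF assms]]) auto

section \<open>Termwise integration of multiple series\<close>

lemma has_sum_prod_PiE:
  fixes f :: "'a \<Rightarrow> 'b \<Rightarrow> real"
  assumes A: "finite A" and B: "\<And>x. x \<in> A \<Longrightarrow> countable (B x)"
    and f: "\<And>x. x \<in> A \<Longrightarrow> (f x has_sum s x) (B x)"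
  shows "((\<lambda>g. \<Prod>x\<in>A. f x (g x)) has_sum (\<Prod>x\<in>A. s x)) (PiE A B)"
proof -
  txt \<open>A real family is summable iff it is absolutely summable; the product rule for absolutely
    summable families is stated for the notion of \<^theory>\<open>HOL-Analysis.Infinite_Set_Sum\<close>.\<close>
  have abs: "Infinite_Sum.abs_summable_on (f x) (B x)" if "x \<in> A" for x
    using f[OF that] summable_on_iff_abs_summable_on_real by (auto simp: summable_on_def)
  then have "Infinite_Set_Sum.abs_summable_on (f x) (B x)" if "x \<in> A" for x
    using that by (simp only: abs_summable_equivalent[symmetric])
  then have "Infinite_Set_Sum.abs_summable_on (\<lambda>g. \<Prod>x\<in>A. f x (g x)) (PiE A B)"
    using abs_summable_on_prod_PiE[of A B f] A B by blast
  then have "Infinite_Sum.abs_summable_on (\<lambda>g. \<Prod>x\<in>A. f x (g x)) (PiE A B)"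
    by (simp only: abs_summable_equivalent)
  moreover have "infsum (\<lambda>g. \<Prod>x\<in>A. f x (g x)) (PiE A B) = (\<Prod>x\<in>A. infsum (f x) (B x))"
    by (rule infsum_prod_PiE_abs[OF A abs])
  moreover have "(\<Prod>x\<in>A. infsum (f x) (B x)) = (\<Prod>x\<in>A. s x)"
    using f by (auto intro!: prod.cong infsumI)
  ultimately show ?thesis
    by (metis abs_summable_summable has_sum_infsum)
qed

lemma has_sum_integral_nat:
  fixes f :: "nat \<Rightarrow> 'a \<Rightarrow> real"
  assumes f: "\<And>j. integrable M (f j)"
    and sums: "\<And>x. x \<in> space M \<Longrightarrow> (\<lambda>j. f j x) sums \<Phi> x"
    and abs_sums: "\<And>x. x \<in> space M \<Longrightarrow> (\<lambda>j. \<bar>f j x\<bar>) sums H x"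
    and H: "integrable M H"
  shows "integrable M \<Phi> \<and> ((\<lambda>j. integral\<^sup>L M (f j)) has_sum integral\<^sup>L M \<Phi>) UNIV"
proof -
  have [measurable]: "f j \<in> borel_measurable M" for j using f by auto
  have "ennreal (\<integral>x. norm (f j x) \<partial>M) = (\<integral>\<^sup>+x. ennreal \<bar>f j x\<bar> \<partial>M)" for j
    using nn_integral_eq_integral[of M "\<lambda>x. \<bar>f j x\<bar>"] f by simp
  then have "(\<Sum>j. ennreal (\<integral>x. norm (f j x) \<partial>M)) = (\<Sum>j. \<integral>\<^sup>+x. ennreal \<bar>f j x\<bar> \<partial>M)"
    by simp
  also have "\<dots> = (\<integral>\<^sup>+x. (\<Sum>j. ennreal \<bar>f j x\<bar>) \<partial>M)"
    by (rule nn_integral_suminf[symmetric]) simp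
  also have "\<dots> = (\<integral>\<^sup>+x. ennreal (H x) \<partial>M)"
    using abs_sums by (intro nn_integral_cong) (auto simp: suminf_ennreal2 sums_iff)
  also have "\<dots> \<le> (\<integral>\<^sup>+x. ennreal (norm (H x)) \<partial>M)"
    by (intro nn_integral_mono) auto
  also have "\<dots> < \<infinity>"
    using H by (simp add: integrable_iff_bounded)
  finally have summable_norm: "summable (\<lambda>j. \<integral>x. norm (f j x) \<partial>M)"
    by (intro summable_suminf_not_top) auto
  have AE_summable: "AE x in M. summable (\<lambda>j. norm (f j x))"
    using abs_sums by (auto simp: sums_iff)
  have suminf_eq: "(\<Sum>j. f j x) = \<Phi> x" if "x \<in> space M" for x
    using sums[OF that] by (simp add: sums_iff)
  have "integrable M (\<lambda>x. \<Sum>j. f j x)"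
    by (rule integrable_suminf[OF f AE_summable summable_norm])
  then have "integrable M \<Phi>"
    by (simp add: Bochner_Integration.integrable_cong[OF refl suminf_eq])
  moreover have "((\<lambda>j. integral\<^sup>L M (f j)) has_sum integral\<^sup>L M \<Phi>) UNIV"
  proof (rule norm_summable_imp_has_sum)
    show "summable (\<lambda>j. norm (integral\<^sup>L M (f j)))"
      by (rule summable_comparison_test'[OF summable_norm]) (simp add: integral_norm_bound)
    show "(\<lambda>j. integral\<^sup>L M (f j)) sums integral\<^sup>L M \<Phi>"
      using sums_integral[OF f AE_summable summable_norm]
      by (simp add: Bochner_Integration.integral_cong[OF refl suminf_eq])
  qed
  ultimately show ?thesis ..
qed

lemma has_sum_integral:
  fixes f :: "'i \<Rightarrow> 'a \<Rightarrow> real"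
  assumes N: "countable N"
    and f: "\<And>n. n \<in> N \<Longrightarrow> integrable M (f n)"
    and sums: "\<And>x. x \<in> space M \<Longrightarrow> ((\<lambda>n. f n x) has_sum \<Phi> x) N"
    and abs_sums: "\<And>x. x \<in> space M \<Longrightarrow> ((\<lambda>n. \<bar>f n x\<bar>) has_sum H x) N"
    and H: "integrable M H"
  shows "integrable M \<Phi> \<and> ((\<lambda>n. integral\<^sup>L M (f n)) has_sum integral\<^sup>L M \<Phi>) N"
proof (cases "finite N")
  case True
  have \<Phi>: "\<Phi> x = (\<Sum>n\<in>N. f n x)" if "x \<in> space M" for x
    using has_sum_unique[OF sums[OF that] has_sum_finite[OF True]] .
  have "integrable M \<Phi>"
    using f by (simp add: Bochner_Integration.integrable_cong[OF refl \<Phi>])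
  moreover have "integral\<^sup>L M \<Phi> = (\<Sum>n\<in>N. integral\<^sup>L M (f n))"
    using f by (simp add: Bochner_Integration.integral_cong[OF refl \<Phi>])
  ultimately show ?thesis
    using True by simp
next
  case False
  let ?e = "from_nat_into N"
  have e: "bij_betw ?e UNIV N"
    using bij_betw_from_nat_into[OF N False] .
  have "integrable M \<Phi> \<and> ((\<lambda>j. integral\<^sup>L M (f (?e j))) has_sum integral\<^sup>L M \<Phi>) UNIV"
  proof (rule has_sum_integral_nat[OF _ _ _ H])
    show "integrable M (f (?e j))" for j
      using e f by (auto simp: bij_betw_def)
    show "(\<lambda>j. f (?e j) x) sums \<Phi> x" if "x \<in> space M" for x
      using has_sum_reindex_bij_betw[OF e, of "\<lambda>n. f n x"] sums[OF that]
      by (simp add: has_sum_imp_sums)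
    show "(\<lambda>j. \<bar>f (?e j) x\<bar>) sums H x" if "x \<in> space M" for x
      using has_sum_reindex_bij_betw[OF e, of "\<lambda>n. \<bar>f n x\<bar>"] abs_sums[OF that]
      by (simp add: has_sum_imp_sums)
  qed
  then show ?thesis
    using has_sum_reindex_bij_betw[OF e, of "\<lambda>n. integral\<^sup>L M (f n)"] by simp
qed

section \<open>The Q-function as a Gaussian tail\<close>

lemma Qfun_eq_integral_std_normal_density:
  "Qfun x = (\<integral>t. indicator {x..} t * std_normal_density t \<partial>lborel)"
  unfolding Qfun_def set_lebesgue_integral_def std_normal_density_def
  by (simp add: mult_ac flip: integral_mult_right_zero)

lemma Qfun_nonneg: "0 \<le> Qfun x"
  unfolding Qfun_eq_integral_std_normal_density by (simp add: integral_nonneg)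

lemma borel_measurable_Qfun[measurable]: "Qfun \<in> borel_measurable borel"
proof -
  have eq: "Qfun = (\<lambda>x. \<integral>t. (if x \<le> t then std_normal_density t else 0) \<partial>lborel)"
    by (simp add: fun_eq_iff Qfun_eq_integral_std_normal_density indicator_def of_bool_def
        if_distrib[of "\<lambda>c. c * _"] cong: if_cong)
  show ?thesis unfolding eq by measurable
qed

lemma Qfun_divide_eq_integral_normal_density:
  fixes \<sigma> :: real assumes "\<sigma> > 0"
  shows "Qfun (x / \<sigma>) = (\<integral>u. indicator {x..} u * normal_density 0 \<sigma> u \<partial>lborel)"
proof -
  have "Qfun (x / \<sigma>) = \<bar>1 / \<sigma>\<bar> *\<^sub>R
      (\<integral>u. indicator {x / \<sigma>..} (0 + 1 / \<sigma> * u) * std_normal_density (0 + 1 / \<sigma> * u) \<partial>lborel)"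
    unfolding Qfun_eq_integral_std_normal_density
    by (rule lborel_integral_real_affine) (use assms in simp)
  also have "\<dots> = (\<integral>u. indicator {x..} u * normal_density 0 \<sigma> u \<partial>lborel)"
    using assms
    by (simp add: normal_density_def indicator_def real_sqrt_mult field_simps
        flip: integral_mult_right_zero)
  finally show ?thesis .
qed

lemma normal_density_inverse_sqrt:
  fixes q u :: real assumes "q > 0"
  shows "normal_density 0 (1 / sqrt (2 * q)) u = sqrt q / sqrt pi * exp (- q * u\<^sup>2)"
  using assms by (simp add: normal_density_def real_sqrt_divide real_sqrt_mult field_simps)

lemma expectation_Qfun_eq_integral_cdf:
  fixes M :: "'a measure" and X :: "'a \<Rightarrow> real" and \<sigma> :: real
  assumes M: "prob_space M" and X[measurable]: "X \<in> borel_measurable M" and \<sigma>: "\<sigma> > 0"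
  shows "prob_space.expectation M (\<lambda>\<omega>. Qfun (X \<omega> / \<sigma>))
       = (\<integral>u. normal_density 0 \<sigma> u * measure M {\<omega> \<in> space M. X \<omega> \<le> u} \<partial>lborel)"
proof -
  txt \<open>Write \<open>Q(X/\<sigma>)\<close> as the Gaussian tail beyond \<open>X\<close> and exchange the two integrals.\<close>
  interpret prob_space M by (rule M)
  interpret pair_sigma_finite M lborel ..
  let ?\<phi> = "normal_density 0 \<sigma>"
  have tail: "ennreal (Qfun (x / \<sigma>)) = (\<integral>\<^sup>+u. ennreal (indicator {x..} u * ?\<phi> u) \<partial>lborel)" for x
  proof -
    have "integrable lborel (\<lambda>u. ?\<phi> u * indicator {x..} u)"
      using \<sigma> by (intro integrable_real_mult_indicator integrable_normal_density) simp_all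
    then show ?thesis
      unfolding Qfun_divide_eq_integral_normal_density[OF \<sigma>]
      by (subst nn_integral_eq_integral) (simp_all add: mult.commute)
  qed
  have cdf_measurable[measurable]: "(\<lambda>u. measure M {\<omega> \<in> space M. X \<omega> \<le> u}) \<in> borel_measurable borel"
    by (intro borel_measurable_mono monoI finite_measure_mono) auto
  have "(\<integral>\<^sup>+\<omega>. ennreal (Qfun (X \<omega> / \<sigma>)) \<partial>M)
      = (\<integral>\<^sup>+\<omega>. \<integral>\<^sup>+u. ennreal (indicator {X \<omega>..} u * ?\<phi> u) \<partial>lborel \<partial>M)"
    by (simp add: tail)
  also have "\<dots> = (\<integral>\<^sup>+u. \<integral>\<^sup>+\<omega>. ennreal (indicator {X \<omega>..} u * ?\<phi> u) \<partial>M \<partial>lborel)"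
  proof -
    have "(\<lambda>(\<omega>, u). ennreal (indicator {X \<omega>..} u * ?\<phi> u)) \<in> borel_measurable (M \<Otimes>\<^sub>M lborel)"
      unfolding indicator_def atLeast_iff normal_density_def by measurable
    from Fubini'[OF this] show ?thesis by simp
  qed
  also have "\<dots> = (\<integral>\<^sup>+u. ennreal (?\<phi> u * measure M {\<omega> \<in> space M. X \<omega> \<le> u}) \<partial>lborel)"
  proof (rule nn_integral_cong)
    fix u
    have "(\<integral>\<^sup>+\<omega>. ennreal (indicator {X \<omega>..} u * ?\<phi> u) \<partial>M)
        = (\<integral>\<^sup>+\<omega>. ennreal (?\<phi> u) * indicator {\<omega> \<in> space M. X \<omega> \<le> u} \<omega> \<partial>M)"
      by (intro nn_integral_cong) (simp add: indicator_def)
    then show "(\<integral>\<^sup>+\<omega>. ennreal (indicator {X \<omega>..} u * ?\<phi> u) \<partial>M)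
        = ennreal (?\<phi> u * measure M {\<omega> \<in> space M. X \<omega> \<le> u})"
      by (simp add: nn_integral_cmult_indicator emeasure_eq_measure ennreal_mult)
  qed
  finally show ?thesis
    using Qfun_nonneg by (simp add: integral_eq_nn_integral)
qed

section \<open>The lower incomplete gamma series\<close>

text \<open>The \<open>m\<close>-th term of the power series of the regularized lower incomplete gamma function
  \<open>P(a, x) = \<gamma>(a, x) / \<Gamma>(a)\<close>, the distribution function of a gamma variable of shape \<open>a\<close>
  and unit scale.\<close>

definition lower_gamma_term :: "real \<Rightarrow> real \<Rightarrow> nat \<Rightarrow> real" where
  "lower_gamma_term a x m = (-1) ^ m * x powr (a + real m) / (fact m * (a + real m) * Gamma a)"

lemma abs_lower_gamma_term_le:
  fixes a x :: real assumes a: "a > 0" and x: "x \<ge> 0"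
  shows "\<bar>lower_gamma_term a x m\<bar> \<le> x powr a / (a * Gamma a) * (x ^ m / fact m)"
proof (cases "x = 0")
  case False
  with x have x: "x > 0" by simp
  have \<Gamma>: "Gamma a > 0" using a by (rule Gamma_real_pos)
  have "\<bar>lower_gamma_term a x m\<bar> = x powr a * x ^ m / fact m / ((a + real m) * Gamma a)"
    using x a \<Gamma> by (simp add: lower_gamma_term_def powr_add powr_realpow abs_mult field_simps)
  also have "\<dots> \<le> x powr a * x ^ m / fact m / (a * Gamma a)"
    using a x \<Gamma> by (intro divide_left_mono mult_right_mono) auto
  finally show ?thesis by (simp add: field_simps)
qed (use a in \<open>simp add: lower_gamma_term_def\<close>)

lemma sums_exp_real: "(\<lambda>m. x ^ m / fact m) sums exp (x :: real)"
  using exp_converges[of x] by (simp add: divide_inverse mult.commute)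

lemma sums_lower_gamma_term_bound:
  fixes a x :: real
  shows "(\<lambda>m. x powr a / (a * Gamma a) * (x ^ m / fact m)) sums (x powr a / (a * Gamma a) * exp x)"
  by (rule sums_mult[OF sums_exp_real])

lemma summable_abs_lower_gamma_term:
  fixes a x :: real assumes "a > 0" and "x \<ge> 0"
  shows "summable (\<lambda>m. \<bar>lower_gamma_term a x m\<bar>)"
  by (rule summable_comparison_test'[OF sums_summable[OF sums_lower_gamma_term_bound]])
     (use abs_lower_gamma_term_le[OF assms] in simp)

lemma has_sum_lower_gamma_term:
  fixes a x :: real
  assumes "a > 0" and "x \<ge> 0"
  shows "(lower_gamma_term a x has_sum (\<Sum>m. lower_gamma_term a x m)) UNIV"
    and "((\<lambda>m. \<bar>lower_gamma_term a x m\<bar>) has_sum (\<Sum>m. \<bar>lower_gamma_term a x m\<bar>)) UNIV"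
  using summable_abs_lower_gamma_term[OF assms]
  by (auto intro!: norm_summable_imp_has_sum summable_sums intro: summable_rabs_cancel)

lemma suminf_abs_lower_gamma_term_le:
  fixes a x :: real assumes "a > 0" and "x \<ge> 0"
  shows "(\<Sum>m. \<bar>lower_gamma_term a x m\<bar>) \<le> x powr a / (a * Gamma a) * exp x"
proof -
  have "(\<Sum>m. \<bar>lower_gamma_term a x m\<bar>) \<le> (\<Sum>m. x powr a / (a * Gamma a) * (x ^ m / fact m))"
    by (rule suminf_le[OF abs_lower_gamma_term_le[OF assms] summable_abs_lower_gamma_term[OF assms]
          sums_summable[OF sums_lower_gamma_term_bound]])
  also have "\<dots> = x powr a / (a * Gamma a) * exp x"
    by (rule sums_unique[OF sums_lower_gamma_term_bound, symmetric])
  finally show ?thesis .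
qed

lemma lower_gamma_term_mult:
  fixes a \<alpha> u :: real
  assumes "\<alpha> \<ge> 0" and "u \<ge> 0"
  shows "lower_gamma_term a (\<alpha> * u) m = lower_gamma_term a \<alpha> m * u powr (a + real m)"
  using assms by (simp add: lower_gamma_term_def powr_mult)

lemma powr_times_exp_series:
  fixes a t :: real
  assumes t: "t > 0"
  shows "(\<lambda>m. (-1) ^ m / fact m * t powr (a + real m - 1)) sums (t powr (a - 1) * exp (- t))"
    and "(\<lambda>m. \<bar>(-1) ^ m / fact m * t powr (a + real m - 1)\<bar>) sums (t powr (a - 1) * exp t)"
proof -
  have powr: "t powr (a + real m - 1) = t powr (a - 1) * t ^ m" for m
    using t by (simp add: diff_add_eq flip: powr_realpow powr_add)
  have "(\<lambda>m. t powr (a - 1) * ((- t) ^ m / fact m)) sums (t powr (a - 1) * exp (- t))"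
    by (rule sums_mult[OF sums_exp_real])
  moreover have "(\<lambda>m. t powr (a - 1) * (t ^ m / fact m)) sums (t powr (a - 1) * exp t)"
    by (rule sums_mult[OF sums_exp_real])
  moreover have "(-1) ^ m / fact m * t powr (a + real m - 1) = t powr (a - 1) * ((- t) ^ m / fact m)"
    and "\<bar>(-1) ^ m / fact m * t powr (a + real m - 1)\<bar> = t powr (a - 1) * (t ^ m / fact m)" for m
    using t by (simp_all add: powr power_minus[of t] abs_mult power_abs)
  ultimately show "(\<lambda>m. (-1) ^ m / fact m * t powr (a + real m - 1)) sums (t powr (a - 1) * exp (- t))"
    and "(\<lambda>m. \<bar>(-1) ^ m / fact m * t powr (a + real m - 1)\<bar>) sums (t powr (a - 1) * exp t)"
    by simp_all
qed

lemma integrable_indicator_powr_exp: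
  fixes a x :: real
  assumes a: "a > 0"
  shows "integrable lborel (\<lambda>t. indicator {0..x} t * (t powr (a - 1) * exp t))"
proof (cases "x \<ge> 0")
  case True
  have "integrable lborel (\<lambda>t. exp x * (indicator {0..x} t * t powr (a - 1)))"
    using has_bochner_integral_indicator_powr[of "a - 1" x] a True
    by (intro integrable_mult_right) (auto simp: has_bochner_integral_iff)
  then show ?thesis
  proof (rule Bochner_Integration.integrable_bound)
    show "AE t in lborel. norm (indicator {0..x} t * (t powr (a - 1) * exp t))
        \<le> norm (exp x * (indicator {0..x} t * t powr (a - 1)))"
      by (intro AE_I2) (auto simp: indicator_def abs_mult field_simps intro!: mult_right_mono)
  qed measurable
qed (simp add: indicator_def)

lemma lower_gamma_term_sums:
  fixes a x :: real
  assumes a: "a > 0" and x: "x \<ge> 0"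
  shows "lower_gamma_term a x sums
           ((\<integral>t. indicator {0..x} t * (t powr (a - 1) * exp (- t)) \<partial>lborel) / Gamma a)"
proof -
  define g where "g m t = (-1) ^ m / fact m * t powr (a + real m - 1)" for m and t :: real
  define f where "f m t = indicator {0..x} t * g m t / Gamma a" for m t
  have f_int: "has_bochner_integral lborel (f m) (lower_gamma_term a x m)" for m
  proof -
    have "has_bochner_integral lborel (\<lambda>t. (-1) ^ m / (fact m * Gamma a) *
        (indicator {0..x} t * t powr (a + real m - 1)))
        ((-1) ^ m / (fact m * Gamma a) * (x powr (a + real m) / (a + real m)))"
      using has_bochner_integral_indicator_powr[of "a + real m - 1" x] a x
      by (intro has_bochner_integral_mult_right) simp
    then show ?thesis
      by (simp add: f_def[abs_def] g_def lower_gamma_term_def mult_ac)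
  qed
  have sums: "(\<lambda>m. f m t) sums (indicator {0..x} t * (t powr (a - 1) * exp (- t)) / Gamma a)" for t
  proof (cases "t > 0")
    case True
    then show ?thesis
      unfolding f_def g_def by (intro sums_divide sums_mult powr_times_exp_series(1))
  qed (auto simp: f_def g_def indicator_def)
  have abs_sums: "(\<lambda>m. \<bar>f m t\<bar>) sums (indicator {0..x} t * (t powr (a - 1) * exp t) / Gamma a)" for t
  proof (cases "t > 0")
    case True
    have abs_f: "(\<lambda>m. \<bar>f m t\<bar>) = (\<lambda>m. indicator {0..x} t * \<bar>g m t\<bar> / Gamma a)"
      using a by (simp add: fun_eq_iff f_def abs_mult)
    show ?thesis
      unfolding abs_f g_def by (intro sums_divide sums_mult powr_times_exp_series(2) True)
  qed (auto simp: f_def g_def indicator_def)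
  have "integrable lborel (\<lambda>t. indicator {0..x} t * (t powr (a - 1) * exp t) / Gamma a)"
    using integrable_indicator_powr_exp[OF a] by (rule integrable_divide)
  from has_sum_integral_nat[OF _ sums abs_sums this] f_int
  have "((\<lambda>m. lower_gamma_term a x m) has_sum
      (\<integral>t. indicator {0..x} t * (t powr (a - 1) * exp (- t)) / Gamma a \<partial>lborel)) UNIV"
    by (simp add: has_bochner_integral_iff)
  then show ?thesis
    by (simp add: has_sum_imp_sums)
qed

section \<open>Maxima of independent gamma variables\<close>

lemma (in prob_space) gamma_distributed_pos:
  assumes "distributed M lborel Z (\<lambda>z. ennreal (gamma_density a b z))"
  shows "AE \<omega> in M. 0 < Z \<omega>"
  by (subst distributed_AE2[OF assms]) (auto simp: gamma_density_def)

lemma (in prob_space) gamma_distributed_cdf: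
  assumes Z: "distributed M lborel Z (\<lambda>z. ennreal (gamma_density a b z))"
    and a: "a > 0" and b: "b > 0" and x: "x \<ge> 0"
  shows "prob {\<omega> \<in> space M. Z \<omega> \<le> b * x} = (\<Sum>m. lower_gamma_term a x m)"
proof -
  define g where "g s = indicator {0..x} s * (s powr (a - 1) * exp (- s)) / Gamma a" for s :: real
  have "emeasure M {\<omega> \<in> space M. Z \<omega> \<le> b * x}
      = (\<integral>\<^sup>+z. ennreal (gamma_density a b z) * indicator {..b * x} z \<partial>lborel)"
    using distributed_emeasure[OF Z, of "{..b * x}"] by (simp add: vimage_def Int_def conj_commute)
  also have "\<dots> = ennreal b * (\<integral>\<^sup>+s. ennreal (gamma_density a b (b * s)) * indicator {..b * x} (b * s) \<partial>lborel)"
    using b by (subst nn_integral_real_affine[where c = b and t = 0]) (auto simp: gamma_density_def)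
  also have "\<dots> = (\<integral>\<^sup>+s. ennreal b * (ennreal (gamma_density a b (b * s)) * indicator {..b * x} (b * s)) \<partial>lborel)"
    unfolding gamma_density_def by (rule nn_integral_cmult[symmetric]) measurable
  also have "\<dots> = (\<integral>\<^sup>+s. ennreal (g s) \<partial>lborel)"
  proof (intro nn_integral_cong)
    fix s :: real
    have "b * ((b * s) powr (a - 1) * exp (- s)) / (Gamma a * b powr a)
        = s powr (a - 1) * exp (- s) / Gamma a" if "s > 0"
      using b that by (simp add: powr_mult powr_diff field_simps)
    then show "ennreal b * (ennreal (gamma_density a b (b * s)) * indicator {..b * x} (b * s))
        = ennreal (g s)"
      using a b by (auto simp: g_def gamma_density_def indicator_def zero_less_mult_iff
          simp flip: ennreal_mult)
  qed
  finally have "ennreal (prob {\<omega> \<in> space M. Z \<omega> \<le> b * x}) = (\<integral>\<^sup>+s. ennreal (g s) \<partial>lborel)"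
    by (simp add: emeasure_eq_measure)
  moreover have "integral\<^sup>L lborel g = enn2real (\<integral>\<^sup>+s. ennreal (g s) \<partial>lborel)"
  proof (rule integral_eq_nn_integral)
    show "g \<in> borel_measurable lborel" unfolding g_def by measurable
  qed (use a in \<open>simp add: g_def\<close>)
  ultimately have "prob {\<omega> \<in> space M. Z \<omega> \<le> b * x} = integral\<^sup>L lborel g"
    by (metis enn2real_ennreal measure_nonneg)
  then show ?thesis
    using sums_unique[OF lower_gamma_term_sums[OF a x]] by (simp add: g_def[abs_def])
qed

lemma (in prob_space) gamma_distributed_scaled_square_le:
  assumes Z: "distributed M lborel Z (\<lambda>z. ennreal (gamma_density a b z))"
    and a: "a > 0" and b: "b > 0" and c: "c > 0" and u: "u \<ge> 0"
  shows "prob {\<omega> \<in> space M. c * (Z \<omega>)\<^sup>2 \<le> u\<^sup>2} = (\<Sum>m. lower_gamma_term a (u / (b * sqrt c)) m)"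
proof -
  have [measurable]: "Z \<in> borel_measurable M"
    using distributed_measurable[OF Z] by simp
  have "c * z\<^sup>2 \<le> u\<^sup>2 \<longleftrightarrow> z \<le> b * (u / (b * sqrt c))" if "z > 0" for z
  proof -
    have "c * z\<^sup>2 = (sqrt c * z)\<^sup>2"
      using c by (simp add: power_mult_distrib)
    then show ?thesis
      using that u b c by (simp add: power2_le_iff_abs_le pos_le_divide_eq mult.commute)
  qed
  then have "prob {\<omega> \<in> space M. c * (Z \<omega>)\<^sup>2 \<le> u\<^sup>2}
      = prob {\<omega> \<in> space M. Z \<omega> \<le> b * (u / (b * sqrt c))}"
    using gamma_distributed_pos[OF Z] by (intro finite_measure_eq_AE) auto
  also have "\<dots> = (\<Sum>m. lower_gamma_term a (u / (b * sqrt c)) m)"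
    using a b c u by (intro gamma_distributed_cdf Z) auto
  finally show ?thesis .
qed

lemma (in prob_space) prob_sqrt_Max_le_gamma:
  fixes Z :: "'i \<Rightarrow> 'a \<Rightarrow> real" and a b c :: "'i \<Rightarrow> real"
  assumes I: "finite I" "I \<noteq> {}"
    and indep: "indep_vars (\<lambda>_. borel) Z I"
    and Z: "\<And>k. k \<in> I \<Longrightarrow> distributed M lborel (Z k) (\<lambda>z. ennreal (gamma_density (a k) (b k) z))"
    and a: "\<And>k. k \<in> I \<Longrightarrow> a k > 0" and b: "\<And>k. k \<in> I \<Longrightarrow> b k > 0"
    and c: "\<And>k. k \<in> I \<Longrightarrow> c k > 0"
  shows "prob {\<omega> \<in> space M. sqrt (Max ((\<lambda>k. c k * (Z k \<omega>)\<^sup>2) ` I)) \<le> u}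
       = indicator {0..} u * (\<Prod>k\<in>I. \<Sum>m. lower_gamma_term (a k) (u / (b k * sqrt (c k))) m)"
proof -
  have Max_nonneg: "0 \<le> Max ((\<lambda>k. c k * (Z k \<omega>)\<^sup>2) ` I)" for \<omega>
    using I c by (simp add: Max_ge_iff) (metis ex_in_conv less_imp_le mult_nonneg_nonneg zero_le_power2)
  show ?thesis
  proof (cases "u \<ge> 0")
    case False
    have no_outcome: "{\<omega> \<in> space M. sqrt (Max ((\<lambda>k. c k * (Z k \<omega>)\<^sup>2) ` I)) \<le> u} = {}"
      using False Max_nonneg by (auto simp: not_le intro: less_le_trans)
    show ?thesis
      unfolding no_outcome using False by simp
  next
    case u: True
    define A where "A k = {z. c k * z\<^sup>2 \<le> u\<^sup>2}" for k
    have "{\<omega> \<in> space M. sqrt (Max ((\<lambda>k. c k * (Z k \<omega>)\<^sup>2) ` I)) \<le> u}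
        = (\<Inter>k\<in>I. Z k -` A k \<inter> space M)"
      using I u Max_nonneg by (auto simp: A_def real_sqrt_le_iff')
    then have "prob {\<omega> \<in> space M. sqrt (Max ((\<lambda>k. c k * (Z k \<omega>)\<^sup>2) ` I)) \<le> u}
        = (\<Prod>k\<in>I. prob (Z k -` A k \<inter> space M))"
      by (simp only:) (rule indep_varsD_finite[OF indep I(2,1)], unfold A_def, measurable)
    also have "\<dots> = (\<Prod>k\<in>I. \<Sum>m. lower_gamma_term (a k) (u / (b k * sqrt (c k))) m)"
    proof (rule prod.cong)
      fix k assume k: "k \<in> I"
      have "prob (Z k -` A k \<inter> space M) = prob {\<omega> \<in> space M. c k * (Z k \<omega>)\<^sup>2 \<le> u\<^sup>2}"
        by (simp add: A_def vimage_def Int_def conj_commute)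
      also have "\<dots> = (\<Sum>m. lower_gamma_term (a k) (u / (b k * sqrt (c k))) m)"
        using u by (intro gamma_distributed_scaled_square_le Z a b c k)
      finally show "prob (Z k -` A k \<inter> space M) = \<dots>" .
    qed simp
    finally show ?thesis using u by simp
  qed
qed

lemma (in prob_space) expectation_Qfun_sqrt_Max_gamma:
  fixes Z :: "'i \<Rightarrow> 'a \<Rightarrow> real" and a b c :: "'i \<Rightarrow> real" and q :: real
  assumes I: "finite I" "I \<noteq> {}"
    and indep: "indep_vars (\<lambda>_. borel) Z I"
    and Z: "\<And>k. k \<in> I \<Longrightarrow> distributed M lborel (Z k) (\<lambda>z. ennreal (gamma_density (a k) (b k) z))"
    and a: "\<And>k. k \<in> I \<Longrightarrow> a k > 0" and b: "\<And>k. k \<in> I \<Longrightarrow> b k > 0"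
    and c: "\<And>k. k \<in> I \<Longrightarrow> c k > 0" and q: "q > 0"
  shows "expectation (\<lambda>\<omega>. Qfun (sqrt (2 * q * Max ((\<lambda>k. c k * (Z k \<omega>)\<^sup>2) ` I))))
       = sqrt q / sqrt pi * (\<integral>u. indicator {0..} u * exp (- q * u\<^sup>2) *
           (\<Prod>k\<in>I. \<Sum>m. lower_gamma_term (a k) (u / (b k * sqrt (c k))) m) \<partial>lborel)"
proof -
  define \<sigma> where "\<sigma> = 1 / sqrt (2 * q)"
  define X where "X \<omega> = sqrt (Max ((\<lambda>k. c k * (Z k \<omega>)\<^sup>2) ` I))" for \<omega>
  have [measurable]: "Z k \<in> borel_measurable M" if "k \<in> I" for k
    using distributed_measurable[OF Z[OF that]] by simp
  have [measurable]: "X \<in> borel_measurable M"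
    using I unfolding X_def by measurable
  have "expectation (\<lambda>\<omega>. Qfun (sqrt (2 * q * Max ((\<lambda>k. c k * (Z k \<omega>)\<^sup>2) ` I))))
      = expectation (\<lambda>\<omega>. Qfun (X \<omega> / \<sigma>))"
    using q by (simp add: X_def \<sigma>_def real_sqrt_mult mult_ac)
  also have "\<dots> = (\<integral>u. normal_density 0 \<sigma> u * prob {\<omega> \<in> space M. X \<omega> \<le> u} \<partial>lborel)"
    using q by (intro expectation_Qfun_eq_integral_cdf prob_space_axioms) (auto simp: \<sigma>_def)
  also have "\<dots> = (\<integral>u. sqrt q / sqrt pi * (indicator {0..} u * exp (- q * u\<^sup>2) *
      (\<Prod>k\<in>I. \<Sum>m. lower_gamma_term (a k) (u / (b k * sqrt (c k))) m)) \<partial>lborel)"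
    unfolding X_def \<sigma>_def normal_density_inverse_sqrt[OF q]
    by (simp add: prob_sqrt_Max_le_gamma[OF I indep Z a b c] mult_ac)
  finally show ?thesis
    by simp
qed

section \<open>The Gaussian-weighted multiple series\<close>

text \<open>The hypothesis \<open>I \<noteq> {}\<close> matters at \<open>u = 0\<close>, since \<open>0 powr 0 = 0\<close>.\<close>

lemma prod_powr_eq_powr_sum:
  fixes u :: real
  assumes "finite I" and "I \<noteq> {}" and "u \<ge> 0"
  shows "(\<Prod>k\<in>I. u powr f k) = u powr (\<Sum>k\<in>I. f k)"
  using assms by (cases "u = 0") (auto simp: powr_sum)

lemma has_bochner_integral_exp_neg_square_prod_lower_gamma_term:
  fixes I :: "'i set" and a \<alpha> :: "'i \<Rightarrow> real" and n :: "'i \<Rightarrow> nat" and q :: real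
  assumes I: "finite I" "I \<noteq> {}" and a: "\<And>k. k \<in> I \<Longrightarrow> a k > 0"
    and \<alpha>: "\<And>k. k \<in> I \<Longrightarrow> \<alpha> k \<ge> 0" and q: "q > 0"
  shows "has_bochner_integral lborel
     (\<lambda>u. indicator {0..} u * exp (- q * u\<^sup>2) * (\<Prod>k\<in>I. lower_gamma_term (a k) (\<alpha> k * u) (n k)))
     ((\<Prod>k\<in>I. lower_gamma_term (a k) (\<alpha> k) (n k)) *
        (Gamma ((\<Sum>k\<in>I. a k + real (n k)) / 2 + 1 / 2)
          / (2 * q powr ((\<Sum>k\<in>I. a k + real (n k)) / 2 + 1 / 2))))"
proof -
  define S where "S = (\<Sum>k\<in>I. a k + real (n k))"
  define P where "P = (\<Prod>k\<in>I. lower_gamma_term (a k) (\<alpha> k) (n k))"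
  have S: "S > 0"
    unfolding S_def using I a by (intro sum_pos) (auto intro: add_pos_nonneg)
  have integrand: "indicator {0..} u * exp (- q * u\<^sup>2) * (\<Prod>k\<in>I. lower_gamma_term (a k) (\<alpha> k * u) (n k))
      = P * (indicator {0..} u * (u powr S * exp (- q * u\<^sup>2)))" for u
  proof (cases "u \<ge> 0")
    case True
    then have "(\<Prod>k\<in>I. lower_gamma_term (a k) (\<alpha> k * u) (n k))
        = P * (\<Prod>k\<in>I. u powr (a k + real (n k)))"
      using \<alpha> by (simp add: P_def lower_gamma_term_mult prod.distrib)
    also have "\<dots> = P * u powr S"
      using I True by (simp add: S_def prod_powr_eq_powr_sum)
    finally show ?thesis using True by (simp add: mult_ac)
  qed simp
  have "has_bochner_integral lborel (\<lambda>u. P * (indicator {0..} u * (u powr S * exp (- q * u\<^sup>2))))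
      (P * (Gamma (S / 2 + 1 / 2) / (2 * q powr (S / 2 + 1 / 2))))"
    using has_bochner_integral_mult_right[OF has_bochner_integral_powr_exp_neg_square[of S q], of P] S q
    by (simp add: add_divide_distrib)
  moreover have "(\<lambda>u. indicator {0..} u * exp (- q * u\<^sup>2) * (\<Prod>k\<in>I. lower_gamma_term (a k) (\<alpha> k * u) (n k)))
      = (\<lambda>u. P * (indicator {0..} u * (u powr S * exp (- q * u\<^sup>2))))"
    by (intro ext integrand)
  ultimately show ?thesis
    by (simp only: S_def P_def)
qed

lemma prod_suminf_abs_lower_gamma_term_le:
  fixes I :: "'i set" and a \<alpha> :: "'i \<Rightarrow> real" and u :: real
  assumes I: "finite I" "I \<noteq> {}" and a: "\<And>k. k \<in> I \<Longrightarrow> a k > 0"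
    and \<alpha>: "\<And>k. k \<in> I \<Longrightarrow> \<alpha> k \<ge> 0" and u: "u \<ge> 0"
  shows "(\<Prod>k\<in>I. \<Sum>m. \<bar>lower_gamma_term (a k) (\<alpha> k * u) m\<bar>)
       \<le> (\<Prod>k\<in>I. \<alpha> k powr a k / (a k * Gamma (a k))) * u powr (\<Sum>k\<in>I. a k) * exp ((\<Sum>k\<in>I. \<alpha> k) * u)"
proof -
  have "(\<Prod>k\<in>I. \<Sum>m. \<bar>lower_gamma_term (a k) (\<alpha> k * u) m\<bar>)
      \<le> (\<Prod>k\<in>I. (\<alpha> k * u) powr a k / (a k * Gamma (a k)) * exp (\<alpha> k * u))"
    using a \<alpha> u by (intro prod_mono conjI suminf_nonneg suminf_abs_lower_gamma_term_le
        summable_abs_lower_gamma_term) auto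
  also have "\<dots> = (\<Prod>k\<in>I. \<alpha> k powr a k / (a k * Gamma (a k)) * u powr a k * exp (\<alpha> k * u))"
    using \<alpha> u by (intro prod.cong) (simp_all add: powr_mult)
  also have "\<dots> = (\<Prod>k\<in>I. \<alpha> k powr a k / (a k * Gamma (a k)))
                   * (\<Prod>k\<in>I. u powr a k) * (\<Prod>k\<in>I. exp (\<alpha> k * u))"
    by (simp only: prod.distrib)
  also have "\<dots> = (\<Prod>k\<in>I. \<alpha> k powr a k / (a k * Gamma (a k))) * u powr (\<Sum>k\<in>I. a k)
                   * exp ((\<Sum>k\<in>I. \<alpha> k) * u)"
    using I u by (simp add: prod_powr_eq_powr_sum exp_sum sum_distrib_right)
  finally show ?thesis .
qed

lemma exp_linear_times_gaussian_le:
  fixes \<beta> q u :: real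
  assumes q: "q > 0"
  shows "exp (\<beta> * u) * exp (- q * u\<^sup>2) \<le> exp (\<beta>\<^sup>2 / q) * exp (- (3 * q / 4) * u\<^sup>2)"
proof -
  have "0 \<le> (\<beta> - q * u / 2)\<^sup>2 / q" using q by simp
  also have "\<dots> = \<beta>\<^sup>2 / q - \<beta> * u + q * u\<^sup>2 / 4"
    using q by (simp add: power2_diff field_simps power2_eq_square)
  finally show ?thesis by (simp flip: exp_add)
qed

lemma integrable_exp_neg_square_prod_suminf_abs_lower_gamma_term:
  fixes I :: "'i set" and a \<alpha> :: "'i \<Rightarrow> real" and q :: real
  assumes I: "finite I" "I \<noteq> {}" and a: "\<And>k. k \<in> I \<Longrightarrow> a k > 0"
    and \<alpha>: "\<And>k. k \<in> I \<Longrightarrow> \<alpha> k \<ge> 0" and q: "q > 0"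
  shows "integrable lborel (\<lambda>u. indicator {0..} u * exp (- q * u\<^sup>2) *
           (\<Prod>k\<in>I. \<Sum>m. \<bar>lower_gamma_term (a k) (\<alpha> k * u) m\<bar>))"
proof -
  define D where "D = (\<Prod>k\<in>I. \<alpha> k powr a k / (a k * Gamma (a k)))"
  define s where "s = (\<Sum>k\<in>I. a k)"
  define \<beta> where "\<beta> = (\<Sum>k\<in>I. \<alpha> k)"
  have s: "s > 0" unfolding s_def using I a by (intro sum_pos) auto
  have D: "D \<ge> 0" unfolding D_def using a
    by (intro prod_nonneg divide_nonneg_pos mult_pos_pos Gamma_real_pos) auto
  have dominant: "integrable lborel
      (\<lambda>u. D * exp (\<beta>\<^sup>2 / q) * (indicator {0..} u * (u powr s * exp (- (3 * q / 4) * u\<^sup>2))))"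
    using has_bochner_integral_powr_exp_neg_square[of s "3 * q / 4"] s q
    by (intro integrable_mult_right) (auto simp: has_bochner_integral_iff)
  have bound: "norm (indicator {0..} u * exp (- q * u\<^sup>2) *
        (\<Prod>k\<in>I. \<Sum>m. \<bar>lower_gamma_term (a k) (\<alpha> k * u) m\<bar>))
      \<le> norm (D * exp (\<beta>\<^sup>2 / q) * (indicator {0..} u * (u powr s * exp (- (3 * q / 4) * u\<^sup>2))))"
    for u
  proof (cases "u \<ge> 0")
    case u: True
    define P where "P = (\<Prod>k\<in>I. \<Sum>m. \<bar>lower_gamma_term (a k) (\<alpha> k * u) m\<bar>)"
    have P: "0 \<le> P"
      unfolding P_def using a \<alpha> u
      by (intro prod_nonneg suminf_nonneg summable_abs_lower_gamma_term) auto
    have "exp (- q * u\<^sup>2) * P \<le> exp (- q * u\<^sup>2) * (D * u powr s * exp (\<beta> * u))"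
      using prod_suminf_abs_lower_gamma_term_le[OF I a \<alpha> u]
      by (intro mult_left_mono) (simp_all add: P_def D_def s_def \<beta>_def)
    also have "\<dots> = D * u powr s * (exp (\<beta> * u) * exp (- q * u\<^sup>2))"
      by (simp add: mult_ac)
    also have "\<dots> \<le> D * u powr s * (exp (\<beta>\<^sup>2 / q) * exp (- (3 * q / 4) * u\<^sup>2))"
      using D exp_linear_times_gaussian_le[OF q] by (intro mult_left_mono) simp_all
    finally show ?thesis
      using u D P by (simp add: P_def abs_mult mult_ac)
  qed simp
  show ?thesis
  proof (rule Bochner_Integration.integrable_bound[OF dominant])
    show "(\<lambda>u. indicator {0..} u * exp (- q * u\<^sup>2) *
        (\<Prod>k\<in>I. \<Sum>m. \<bar>lower_gamma_term (a k) (\<alpha> k * u) m\<bar>)) \<in> borel_measurable lborel"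
      unfolding lower_gamma_term_def by measurable
  qed (intro AE_I2 bound)
qed

lemma has_sum_integral_exp_neg_square_prod_lower_gamma:
  fixes I :: "'i set" and a \<alpha> :: "'i \<Rightarrow> real" and q :: real
  assumes I: "finite I" "I \<noteq> {}" and a: "\<And>k. k \<in> I \<Longrightarrow> a k > 0"
    and \<alpha>: "\<And>k. k \<in> I \<Longrightarrow> \<alpha> k \<ge> 0" and q: "q > 0"
  shows "((\<lambda>n. (\<Prod>k\<in>I. lower_gamma_term (a k) (\<alpha> k) (n k)) *
            (Gamma ((\<Sum>k\<in>I. a k + real (n k)) / 2 + 1 / 2)
              / (2 * q powr ((\<Sum>k\<in>I. a k + real (n k)) / 2 + 1 / 2))))
         has_sum (\<integral>u. indicator {0..} u * exp (- q * u\<^sup>2) *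
                    (\<Prod>k\<in>I. \<Sum>m. lower_gamma_term (a k) (\<alpha> k * u) m) \<partial>lborel))
         (PiE I (\<lambda>_. UNIV))"
proof -
  let ?w = "\<lambda>u. indicator {0..} u * exp (- q * u\<^sup>2)"
  let ?f = "\<lambda>n u. ?w u * (\<Prod>k\<in>I. lower_gamma_term (a k) (\<alpha> k * u) (n k))"
  note term_integral = has_bochner_integral_exp_neg_square_prod_lower_gamma_term
    [where I = I and a = a and \<alpha> = \<alpha> and q = q, OF I a \<alpha> q]
  have pointwise: "((\<lambda>n. ?f n u) has_sum (?w u * (\<Prod>k\<in>I. \<Sum>m. lower_gamma_term (a k) (\<alpha> k * u) m)))
        (PiE I (\<lambda>_. UNIV)) \<and>
      ((\<lambda>n. \<bar>?f n u\<bar>) has_sum (?w u * (\<Prod>k\<in>I. \<Sum>m. \<bar>lower_gamma_term (a k) (\<alpha> k * u) m\<bar>)))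
        (PiE I (\<lambda>_. UNIV))" for u
  proof (cases "u \<ge> 0")
    case u: True
    have "((\<lambda>n. \<Prod>k\<in>I. lower_gamma_term (a k) (\<alpha> k * u) (n k)) has_sum
        (\<Prod>k\<in>I. \<Sum>m. lower_gamma_term (a k) (\<alpha> k * u) m)) (PiE I (\<lambda>_. UNIV))"
      using a \<alpha> u by (intro has_sum_prod_PiE I has_sum_lower_gamma_term(1)) auto
    moreover have "((\<lambda>n. \<Prod>k\<in>I. \<bar>lower_gamma_term (a k) (\<alpha> k * u) (n k)\<bar>) has_sum
        (\<Prod>k\<in>I. \<Sum>m. \<bar>lower_gamma_term (a k) (\<alpha> k * u) m\<bar>)) (PiE I (\<lambda>_. UNIV))"
      using a \<alpha> u by (intro has_sum_prod_PiE I has_sum_lower_gamma_term(2)) auto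
    ultimately show ?thesis
      by (auto simp: abs_mult abs_prod intro: has_sum_cmult_right)
  qed simp
  have "integrable lborel (\<lambda>u. ?w u * (\<Prod>k\<in>I. \<Sum>m. lower_gamma_term (a k) (\<alpha> k * u) m)) \<and>
      ((\<lambda>n. integral\<^sup>L lborel (?f n)) has_sum
        (\<integral>u. ?w u * (\<Prod>k\<in>I. \<Sum>m. lower_gamma_term (a k) (\<alpha> k * u) m) \<partial>lborel)) (PiE I (\<lambda>_. UNIV))"
  proof (rule has_sum_integral)
    show "countable (PiE I (\<lambda>_. UNIV :: nat set))"
      using I by (simp add: countable_PiE)
    show "integrable lborel (?f n)" for n
      using term_integral by (simp add: has_bochner_integral_iff)
    show "integrable lborel (\<lambda>u. ?w u * (\<Prod>k\<in>I. \<Sum>m. \<bar>lower_gamma_term (a k) (\<alpha> k * u) m\<bar>))"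
      by (rule integrable_exp_neg_square_prod_suminf_abs_lower_gamma_term[OF I a \<alpha> q])
  qed (use pointwise in auto)
  moreover have "(\<lambda>n. integral\<^sup>L lborel (?f n))
      = (\<lambda>n. (\<Prod>k\<in>I. lower_gamma_term (a k) (\<alpha> k) (n k)) *
            (Gamma ((\<Sum>k\<in>I. a k + real (n k)) / 2 + 1 / 2)
              / (2 * q powr ((\<Sum>k\<in>I. a k + real (n k)) / 2 + 1 / 2))))"
    by (rule ext) (rule has_bochner_integral_integral_eq[OF term_integral])
  ultimately show ?thesis
    by (simp only:)
qed

theorem theorem4:
  fixes M :: "'a measure" and Z :: "nat \<Rightarrow> 'a \<Rightarrow> real"
    and K :: nat and a b PL :: "nat \<Rightarrow> real" and gbar p q :: real
  assumes "prob_space M"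
    and "K \<ge> 1"
    and "\<And>k. k \<in> {1..K} \<Longrightarrow> a k > 0"
    and "\<And>k. k \<in> {1..K} \<Longrightarrow> b k > 0"
    and "\<And>k. k \<in> {1..K} \<Longrightarrow> PL k > 0"
    and "gbar > 0" and "p > 0" and "q > 0"
    and "prob_space.indep_vars M (\<lambda>_. borel) Z {1..K}"
    and "\<And>k. k \<in> {1..K} \<Longrightarrow>
           distributed M lborel (Z k) (\<lambda>x. ennreal (gamma_density (a k) (b k) x))"
  shows "((\<lambda>n. p * sqrt q / (2 * sqrt pi) *
            (\<Prod>k\<in>{1..K}. (-1) ^ n k * (sqrt (PL k / (gbar * (b k)\<^sup>2))) powr (a k + real (n k))
                 / (fact (n k) * (a k + real (n k)) * Gamma (a k))) *
            Gamma ((\<Sum>k\<in>{1..K}. a k + real (n k)) / 2 + 1 / 2) /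
            q powr ((\<Sum>k\<in>{1..K}. a k + real (n k)) / 2 + 1 / 2))
         has_sum
           prob_space.expectation M
             (\<lambda>\<omega>. p * Qfun (sqrt (2 * q * Max ((\<lambda>k. gbar / PL k * (Z k \<omega>)\<^sup>2) ` {1..K})))))
         (PiE {1..K} (\<lambda>_. UNIV))"
proof -
  interpret prob_space M by fact
  define I where "I = {1..K}"
  define c where "c k = gbar / PL k" for k
  define \<alpha> where "\<alpha> k = sqrt (PL k / (gbar * (b k)\<^sup>2))" for k
  have I: "finite I" "I \<noteq> {}" using assms(2) by (auto simp: I_def)
  have a: "\<And>k. k \<in> I \<Longrightarrow> a k > 0" and b: "\<And>k. k \<in> I \<Longrightarrow> b k > 0"
    and c: "\<And>k. k \<in> I \<Longrightarrow> c k > 0"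
    using assms(3-6) by (auto simp: I_def c_def)
  have \<alpha>: "\<alpha> k \<ge> 0" if "k \<in> I" for k
    using that assms(5)[of k] assms(6) by (simp add: I_def \<alpha>_def)
  have "u / (b k * sqrt (c k)) = \<alpha> k * u" if "k \<in> I" for k u
    using b[OF that] that assms(5)[of k] assms(6)
    by (simp add: I_def \<alpha>_def c_def real_sqrt_divide real_sqrt_mult field_simps)
  then have expectation_eq: "expectation (\<lambda>\<omega>. p * Qfun (sqrt (2 * q * Max ((\<lambda>k. c k * (Z k \<omega>)\<^sup>2) ` I))))
      = p * sqrt q / sqrt pi * (\<integral>u. indicator {0..} u * exp (- q * u\<^sup>2) *
          (\<Prod>k\<in>I. \<Sum>m. lower_gamma_term (a k) (\<alpha> k * u) m) \<partial>lborel)"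
    using expectation_Qfun_sqrt_Max_gamma[where I = I and Z = Z and a = a and b = b and c = c,
        OF I assms(9)[folded I_def] assms(10)[folded I_def] a b c assms(8)]
    by simp
  have rearrange: "p * sqrt q / sqrt pi * (P * (G / (2 * Q))) = p * sqrt q / (2 * sqrt pi) * P * G / Q"
    for P G Q :: real
    by simp
  from has_sum_cmult_right[OF has_sum_integral_exp_neg_square_prod_lower_gamma
      [where I = I and a = a and \<alpha> = \<alpha> and q = q, OF I a \<alpha> assms(8)], where c = "p * sqrt q / sqrt pi"]
  show ?thesis
    unfolding expectation_eq[symmetric] rearrange unfolding I_def \<alpha>_def lower_gamma_term_def c_def .
qed

end
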